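(* Let $n\ge1$ and let $\mathcal A,\mathcal S$ be subsets of $\{E_{ij}:1\le i,j\le n\}$, with associated digraphs $\mathcal G_{\mathcal A}$, $\mathcal G_{\mathcal S}$ on $\{1,\dots,n\}$ (arc $(i,j)$ iff $E_{ij}$ belongs to the set; arcs $(i,i)$ are self-loops). Suppose (i) each weakly connected component of $\mathcal G_{\mathcal S}$ is strongly connected with at least two nodes; (ii) the union digraph $\mathcal G_{\mathcal A}\cup\mathcal G_{\mathcal S}$ is strongly connected and has at least one self-loop. Then there exists $A\in\Sigma_{\rm r}(\mathcal A)$ such that the real Lie algebra generated by $\{A\}\cup\mathcal S$ equals $\mathfrak{gl}(n)$.
   Context: $E_{ij}$ is the $n\times n$ matrix unit; $\mathfrak{gl}(n)$ is the Lie algebra of real $n\times n$ matrices with commutator bracket. For $\mathcal A=\{g_1,\dots,g_k\}$, $\Sigma_{\rm r}(\mathcal A)=\{\sum_s l_sg_s: l_s\in\mathbb R,\ l_s\ne0\text{ for all }s\}$. Weakly connected component: connected component ignoring arc directions; strongly connected: all nodes mutually reachable via directed paths. *)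

theory Defs
  imports "HOL-Analysis.Analysis"
begin

text \<open>Matrices in gl(n) are real n x n matrices, with n = CARD('n) for a finite index type 'n.\<close>

definition mat_unit :: "'n::finite \<Rightarrow> 'n \<Rightarrow> real^'n^'n" where
  "mat_unit i j = (\<chi> k l. if k = i \<and> l = j then 1 else 0)"

definition lie_bracket :: "real^'n::finite^'n \<Rightarrow> real^'n^'n \<Rightarrow> real^'n^'n" where
  "lie_bracket X Y = X ** Y - Y ** X"

definition lie_subalgebra :: "(real^'n::finite^'n) set \<Rightarrow> bool" where
  "lie_subalgebra L \<longleftrightarrow> subspace L \<and> (\<forall>X\<in>L. \<forall>Y\<in>L. lie_bracket X Y \<in> L)"

definition lie_generated :: "(real^'n::finite^'n) set \<Rightarrow> (real^'n^'n) set" where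
  "lie_generated G = \<Inter>{L. G \<subseteq> L \<and> lie_subalgebra L}"

definition units_of_arcs :: "('n::finite \<times> 'n) set \<Rightarrow> (real^'n^'n) set" where
  "units_of_arcs Ar = (\<lambda>(i,j). mat_unit i j) ` Ar"

text \<open>Sigma_r: linear combinations of all elements of the set with all coefficients nonzero.
  Elements of units_of_arcs Ar correspond bijectively to arcs in Ar.\<close>
definition sigma_r :: "('n::finite \<times> 'n) set \<Rightarrow> (real^'n^'n) set" where
  "sigma_r Ar = {(\<Sum>(i,j)\<in>Ar. l (i,j) *\<^sub>R mat_unit i j) | l. \<forall>a\<in>Ar. l a \<noteq> 0}"

definition weakly_reach :: "('n \<times> 'n) set \<Rightarrow> ('n \<times> 'n) set" where
  "weakly_reach G = (G \<union> G\<inverse>)\<^sup>*"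

definition strongly_connected_digraph :: "('n \<times> 'n) set \<Rightarrow> bool" where
  "strongly_connected_digraph G \<longleftrightarrow> (\<forall>i j. (i, j) \<in> G\<^sup>*)"

definition components_strong_nontrivial :: "('n \<times> 'n) set \<Rightarrow> bool" where
  "components_strong_nontrivial G \<longleftrightarrow>
     (\<forall>i j. (i, j) \<in> weakly_reach G \<longrightarrow> (i, j) \<in> G\<^sup>*) \<and>
     (\<forall>i. \<exists>j. j \<noteq> i \<and> (i, j) \<in> weakly_reach G)"

end

theory Submission
  imports Defs
begin

text \<open>
  Let L be a Lie subalgebra containing A and the units of G_S. Brackets along paths put every E_xy
  with x \<noteq> y in a common G_S-component into L, and the elements [E_xy, E_yx] = E_xx - E_yy
  separate all matrix positions, so a product of shifted operators ad(E_xx - E_yy) projects A onto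
  its diagonal. The weight 3 on a self-loop at k (or E_kk itself, if the loop lies in G_S) thus
  gives a diagonal H in L with nonzero trace whose entry at k dominates the others.
  Induction along paths from k in the strongly connected union digraph puts every E_kb into L:
  arcs inside a G_S-component are handled by brackets of units, an A-arc (a,b) between components
  by [E_pa, [A, E_bs]] = A_ab E_ps + A_sp E_ba for neighbours p of a and s of b, whose two terms
  are split by a further bracket or by the eigenvalues of ad H. The automorphism
  M \<mapsto> - transpose M turns this into E_bk \<in> L, which gives all off-diagonal units and all
  E_xx - E_kk, and the nonzero trace of H then gives E_kk.
\<close>

lemma mat_unit_nth [simp]: "mat_unit i j $ u $ v = (if u = i \<and> v = j then 1 else 0)"
  by (simp add: mat_unit_def)

lemma mat_unit_mult_left_nth: "(mat_unit i j ** X) $ u $ v = (if u = i then X $ j $ v else 0)"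
  by (simp add: matrix_matrix_mult_def if_distrib if_distribR cong: if_cong)

lemma mat_unit_mult_right_nth: "(X ** mat_unit i j) $ u $ v = (if v = j then X $ u $ i else 0)"
  by (simp add: matrix_matrix_mult_def if_distrib if_distribR conj_commute cong: if_cong)

lemma mat_unit_mult: "mat_unit i j ** mat_unit k l = (if j = k then mat_unit i l else 0)"
  by (simp add: vec_eq_iff mat_unit_mult_left_nth)

lemma lie_bracket_nth: "lie_bracket X Y $ u $ v = (X ** Y) $ u $ v - (Y ** X) $ u $ v"
  by (simp add: lie_bracket_def)

lemma lie_bracket_mat_unit:
  "lie_bracket (mat_unit i j) (mat_unit k l) =
     (if j = k then mat_unit i l else 0) - (if l = i then mat_unit k j else 0)"
  by (simp add: lie_bracket_def mat_unit_mult)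

lemma lie_bracket_add_right: "lie_bracket X (Y + Z) = lie_bracket X Y + lie_bracket X Z"
  by (simp add: vec_eq_iff lie_bracket_nth matrix_matrix_mult_def sum.distrib algebra_simps)

lemma lie_bracket_scaleR_right: "lie_bracket X (c *\<^sub>R Y) = c *\<^sub>R lie_bracket X Y"
  by (simp add: vec_eq_iff lie_bracket_nth matrix_matrix_mult_def sum_distrib_left algebra_simps)

lemma lie_bracket_mat_unit_sandwich:
  assumes "a \<noteq> b" "s \<noteq> p"
  shows "lie_bracket (mat_unit p a) (lie_bracket X (mat_unit b s)) =
           X$a$b *\<^sub>R mat_unit p s + X$s$p *\<^sub>R mat_unit b a"
  using assms
  by (auto simp: vec_eq_iff lie_bracket_nth mat_unit_mult_left_nth mat_unit_mult_right_nth)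

lemma mat_unit_expansion: "(\<Sum>(i, j)\<in>UNIV. M$i$j *\<^sub>R mat_unit i j) = M"
proof -
  have "(\<Sum>(i, j)\<in>UNIV. M$i$j * mat_unit i j $ u $ v) = M$u$v" for u v
  proof -
    have "(\<Sum>(i, j)\<in>UNIV. M$i$j * mat_unit i j $ u $ v) =
          (\<Sum>q\<in>UNIV. if q = (u, v) then M$u$v else 0)"
      by (rule sum.cong) (auto split: if_splits)
    then show ?thesis by simp
  qed
  then show ?thesis
    by (simp add: vec_eq_iff case_prod_unfold)
qed

lemma sum_mat_units_nth:
  "(\<Sum>(i, j)\<in>G. l (i, j) *\<^sub>R mat_unit i j) $ u $ v = (if (u, v) \<in> G then l (u, v) else 0)"
proof -
  have "(\<Sum>(i, j)\<in>G. l (i, j) *\<^sub>R mat_unit i j) $ u $ v =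
        (\<Sum>q\<in>G. l q * mat_unit (fst q) (snd q) $ u $ v)"
    by (simp only: sum_component case_prod_unfold vector_scaleR_component real_scaleR_def
        prod.collapse)
  also have "\<dots> = (\<Sum>q\<in>G. if q = (u, v) then l (u, v) else 0)"
    by (rule sum.cong) auto
  finally show ?thesis
    by (simp add: finite_subset[OF subset_UNIV])
qed

definition diagonal_matrix :: "real^'n::finite^'n \<Rightarrow> bool" where
  "diagonal_matrix H \<longleftrightarrow> (\<forall>u v. u \<noteq> v \<longrightarrow> H$u$v = 0)"

definition diagonal_part :: "real^'n::finite^'n \<Rightarrow> real^'n^'n" where
  "diagonal_part X = (\<chi> u v. if u = v then X$u$v else 0)"

lemma diagonal_matrix_diagonal_part: "diagonal_matrix (diagonal_part X)"
  by (simp add: diagonal_matrix_def diagonal_part_def)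

lemma diagonal_matrix_mat_unit: "diagonal_matrix (mat_unit i i)"
  by (simp add: diagonal_matrix_def)

lemma diagonal_matrix_mult_nth:
  assumes "diagonal_matrix H"
  shows "(H ** Y) $ u $ v = H$u$u * Y$u$v" and "(Y ** H) $ u $ v = Y$u$v * H$v$v"
proof -
  have "(\<Sum>w\<in>UNIV. H$u$w * Y$w$v) = (\<Sum>w\<in>UNIV. if w = u then H$u$u * Y$u$v else 0)"
    using assms by (intro sum.cong) (auto simp: diagonal_matrix_def)
  moreover have "(\<Sum>w\<in>UNIV. Y$u$w * H$w$v) = (\<Sum>w\<in>UNIV. if w = v then Y$u$v * H$v$v else 0)"
    using assms by (intro sum.cong) (auto simp: diagonal_matrix_def)
  ultimately show "(H ** Y) $ u $ v = H$u$u * Y$u$v" and "(Y ** H) $ u $ v = Y$u$v * H$v$v"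
    by (simp_all add: matrix_matrix_mult_def)
qed

lemma lie_bracket_diagonal_nth:
  "diagonal_matrix H \<Longrightarrow> lie_bracket H Y $ u $ v = (H$u$u - H$v$v) * Y$u$v"
  by (simp add: lie_bracket_nth diagonal_matrix_mult_nth algebra_simps)

lemma lie_bracket_diagonal_mat_unit:
  "diagonal_matrix H \<Longrightarrow> lie_bracket H (mat_unit i j) = (H$i$i - H$j$j) *\<^sub>R mat_unit i j"
  by (auto simp: vec_eq_iff lie_bracket_diagonal_nth)

lemma diagonal_expansion:
  assumes "diagonal_matrix H"
  shows "(\<Sum>x\<in>UNIV. H$x$x *\<^sub>R mat_unit x x) = H"
proof -
  have "(\<Sum>x\<in>UNIV. H$x$x * mat_unit x x $ u $ v) = H$u$v" for u v
  proof -
    have "(\<Sum>x\<in>UNIV. H$x$x * mat_unit x x $ u $ v) =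
          (\<Sum>x\<in>UNIV. if x = u then (if u = v then H$u$u else 0) else 0)"
      by (rule sum.cong) auto
    then show ?thesis
      using assms by (simp add: diagonal_matrix_def)
  qed
  then show ?thesis
    by (simp add: vec_eq_iff)
qed

definition entrywise_mult :: "('n \<Rightarrow> 'n \<Rightarrow> real) \<Rightarrow> real^'n::finite^'n \<Rightarrow> real^'n^'n" where
  "entrywise_mult f Y = (\<chi> u v. f u v * Y$u$v)"

lemma entrywise_mult_nth [simp]: "entrywise_mult f Y $ u $ v = f u v * Y$u$v"
  by (simp add: entrywise_mult_def)

lemma lie_subalgebra_subspace: "lie_subalgebra L \<Longrightarrow> subspace L"
  by (simp add: lie_subalgebra_def)

lemma lie_subalgebra_bracket:
  "lie_subalgebra L \<Longrightarrow> X \<in> L \<Longrightarrow> Y \<in> L \<Longrightarrow> lie_bracket X Y \<in> L"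
  by (simp add: lie_subalgebra_def)

lemma lie_subalgebra_scaleR_iff:
  assumes "lie_subalgebra L" "c \<noteq> 0"
  shows "c *\<^sub>R X \<in> L \<longleftrightarrow> X \<in> L"
  using subspace_scale[OF lie_subalgebra_subspace[OF assms(1)], of _ c]
    subspace_scale[OF lie_subalgebra_subspace[OF assms(1)], of "c *\<^sub>R X" "inverse c"] assms(2)
  by auto

lemma lie_subalgebra_mat_unit_trans:
  assumes "lie_subalgebra L" "mat_unit x y \<in> L" "mat_unit y z \<in> L" "x \<noteq> z"
  shows "mat_unit x z \<in> L"
  using lie_subalgebra_bracket[OF assms(1-3)] assms(4) by (simp add: lie_bracket_mat_unit)

lemma lie_subalgebra_mat_unit_path:
  assumes L: "lie_subalgebra L" and arcs: "\<And>a b. (a, b) \<in> G \<Longrightarrow> mat_unit a b \<in> L"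
    and "(x, y) \<in> G\<^sup>*" "x \<noteq> y"
  shows "mat_unit x y \<in> L"
proof -
  from \<open>(x, y) \<in> G\<^sup>*\<close> have "y = x \<or> mat_unit x y \<in> L"
  proof (induction rule: rtrancl_induct)
    case base
    then show ?case by simp
  next
    case (step y z)
    then show ?case
      using arcs lie_subalgebra_mat_unit_trans[OF L] by metis
  qed
  with \<open>x \<noteq> y\<close> show ?thesis by simp
qed

lemma lie_subalgebra_ad_diagonal:
  assumes L: "lie_subalgebra L" and "diagonal_matrix H" "H \<in> L" "Y \<in> L"
  shows "entrywise_mult (\<lambda>u v. H$u$u - H$v$v - \<mu>) Y \<in> L"
proof -
  have "lie_bracket H Y - \<mu> *\<^sub>R Y \<in> L"
    using assms lie_subalgebra_bracket[OF L] lie_subalgebra_subspace[OF L]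
    by (simp add: subspace_diff subspace_scale)
  moreover have "lie_bracket H Y - \<mu> *\<^sub>R Y = entrywise_mult (\<lambda>u v. H$u$u - H$v$v - \<mu>) Y"
    using assms(2) by (simp add: vec_eq_iff lie_bracket_diagonal_nth algebra_simps)
  ultimately show ?thesis by simp
qed

lemma lie_subalgebra_ad_diagonal_prod:
  assumes L: "lie_subalgebra L" and "finite P" and H: "\<And>q. q \<in> P \<Longrightarrow> diagonal_matrix (H q) \<and> H q \<in> L"
    and "Y \<in> L"
  shows "entrywise_mult (\<lambda>u v. \<Prod>q\<in>P. H q $u$u - H q $v$v - \<mu> q) Y \<in> L"
  using \<open>finite P\<close> H
proof (induction P rule: finite_induct)
  case empty
  then show ?case
    using \<open>Y \<in> L\<close> by (simp add: entrywise_mult_def)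
next
  case (insert q P)
  then have "entrywise_mult (\<lambda>u v. H q $u$u - H q $v$v - \<mu> q)
      (entrywise_mult (\<lambda>u v. \<Prod>q\<in>P. H q $u$u - H q $v$v - \<mu> q) Y) \<in> L"
    by (intro lie_subalgebra_ad_diagonal[OF L]) auto
  with insert.hyps show ?case
    by (simp add: entrywise_mult_def mult.assoc)
qed

text \<open>A product of the operators ad H - \<lambda> over suitable eigenvalues \<lambda> annihilates every
  off-diagonal position and rescales the diagonal by a nonzero constant.\<close>
lemma lie_subalgebra_diagonal_part:
  assumes L: "lie_subalgebra L" and "X \<in> L"
    and separating: "\<And>u v. u \<noteq> v \<Longrightarrow> \<exists>H\<in>L. diagonal_matrix H \<and> H$u$u \<noteq> H$v$v"
  shows "diagonal_part X \<in> L"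
proof -
  define P where "P = {q :: 'a \<times> 'a. fst q \<noteq> snd q}"
  have "\<forall>q\<in>P. \<exists>H\<in>L. diagonal_matrix H \<and> H $ fst q $ fst q \<noteq> H $ snd q $ snd q"
    using separating unfolding P_def by auto
  then obtain H where H: "\<And>q. q \<in> P \<Longrightarrow> H q \<in> L \<and> diagonal_matrix (H q) \<and>
      H q $ fst q $ fst q \<noteq> H q $ snd q $ snd q"
    by metis
  define \<mu> where "\<mu> q = H q $ fst q $ fst q - H q $ snd q $ snd q" for q
  define c where "c = (\<Prod>q\<in>P. - \<mu> q)"
  have "(\<Prod>q\<in>P. H q $u$u - H q $v$v - \<mu> q) = (if u = v then c else 0)" for u v
  proof (cases "u = v")
    case False
    then have "(u, v) \<in> P" by (simp add: P_def)
    moreover have "H (u, v) $u$u - H (u, v) $v$v - \<mu> (u, v) = 0"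
      by (simp add: \<mu>_def)
    ultimately show ?thesis
      using False by (auto intro: prod_zero)
  qed (simp add: c_def)
  then have "entrywise_mult (\<lambda>u v. \<Prod>q\<in>P. H q $u$u - H q $v$v - \<mu> q) X = c *\<^sub>R diagonal_part X"
    by (simp add: vec_eq_iff diagonal_part_def)
  moreover have "c \<noteq> 0"
    using H unfolding c_def \<mu>_def by (simp add: prod_zero_iff) (metis prod.collapse)
  moreover have "entrywise_mult (\<lambda>u v. \<Prod>q\<in>P. H q $u$u - H q $v$v - \<mu> q) X \<in> L"
    using H by (intro lie_subalgebra_ad_diagonal_prod[OF L _ _ \<open>X \<in> L\<close>]) auto
  ultimately show ?thesis
    using lie_subalgebra_scaleR_iff[OF L] by simp
qed

lemma weakly_reach_sym: "(x, y) \<in> weakly_reach G \<Longrightarrow> (y, x) \<in> weakly_reach G"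
  unfolding weakly_reach_def by (metis sym_Un_converse sym_rtrancl symD)

lemma weakly_reach_converse [simp]: "weakly_reach (G\<inverse>) = weakly_reach G"
proof -
  have "G\<inverse> \<union> (G\<inverse>)\<inverse> = G \<union> G\<inverse>"
    by auto
  then show ?thesis
    unfolding weakly_reach_def by simp
qed

lemma components_strong_nontrivial_converse:
  assumes "components_strong_nontrivial G"
  shows "components_strong_nontrivial (G\<inverse>)"
  unfolding components_strong_nontrivial_def weakly_reach_converse
proof (intro conjI allI impI)
  fix i j
  assume "(i, j) \<in> weakly_reach G"
  then have "(j, i) \<in> weakly_reach G"
    by (rule weakly_reach_sym)
  then have "(j, i) \<in> G\<^sup>*"
    using assms unfolding components_strong_nontrivial_def by simp
  then show "(i, j) \<in> (G\<inverse>)\<^sup>*"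
    by (rule rtrancl_converseI)
qed (use assms in \<open>simp add: components_strong_nontrivial_def\<close>)

lemma strongly_connected_digraph_converse:
  "strongly_connected_digraph G \<Longrightarrow> strongly_connected_digraph (G\<inverse>)"
  by (simp add: strongly_connected_digraph_def rtrancl_converse)

lemma lie_subalgebra_mat_unit_component:
  assumes L: "lie_subalgebra L" and G: "components_strong_nontrivial G"
    and arcs: "\<And>a b. (a, b) \<in> G \<Longrightarrow> mat_unit a b \<in> L"
    and "(x, y) \<in> weakly_reach G" "x \<noteq> y"
  shows "mat_unit x y \<in> L"
proof -
  have "(x, y) \<in> G\<^sup>*"
    using G \<open>(x, y) \<in> weakly_reach G\<close> unfolding components_strong_nontrivial_def by blast
  then show ?thesis
    using lie_subalgebra_mat_unit_path[OF L arcs] \<open>x \<noteq> y\<close> by blast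
qed

lemma lie_subalgebra_separating_diagonals:
  assumes L: "lie_subalgebra L" and G: "components_strong_nontrivial G"
    and arcs: "\<And>a b. (a, b) \<in> G \<Longrightarrow> mat_unit a b \<in> L" and "u \<noteq> v"
  shows "\<exists>H\<in>L. diagonal_matrix H \<and> H$u$u \<noteq> H$v$v"
proof -
  obtain w where "w \<noteq> u" and uw: "(u, w) \<in> weakly_reach G"
    using G unfolding components_strong_nontrivial_def by blast
  have "mat_unit u w \<in> L"
    using lie_subalgebra_mat_unit_component[OF L G arcs uw] \<open>w \<noteq> u\<close> by simp
  moreover have "mat_unit w u \<in> L"
    by (rule lie_subalgebra_mat_unit_component[OF L G arcs weakly_reach_sym[OF uw] \<open>w \<noteq> u\<close>])
  ultimately have "lie_bracket (mat_unit u w) (mat_unit w u) \<in> L"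
    by (rule lie_subalgebra_bracket[OF L])
  moreover have "lie_bracket (mat_unit u w) (mat_unit w u) = mat_unit u u - mat_unit w w"
    using \<open>w \<noteq> u\<close> by (simp add: lie_bracket_mat_unit)
  moreover have "diagonal_matrix (mat_unit u u - mat_unit w w)"
    by (simp add: diagonal_matrix_def)
  ultimately show ?thesis
    using \<open>w \<noteq> u\<close> \<open>u \<noteq> v\<close> by (intro bexI[of _ "mat_unit u u - mat_unit w w"]) auto
qed

text \<open>The eigenvalue of ad H at the matrix unit E_ij is H_ii - H_jj; a separating diagonal
  matrix distinguishes the eigenvalues at E_kd and E_d'c whenever d, d' \<noteq> k.\<close>
definition separating_diagonal :: "'n::finite \<Rightarrow> real^'n^'n \<Rightarrow> bool" where
  "separating_diagonal k H \<longleftrightarrow> diagonal_matrix H \<and>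
     (\<forall>c d d'. d \<noteq> k \<longrightarrow> d' \<noteq> k \<longrightarrow> H$k$k - H$d$d \<noteq> H$d'$d' - H$c$c)"

definition dominant_diagonal_at :: "'n::finite \<Rightarrow> real^'n^'n \<Rightarrow> bool" where
  "dominant_diagonal_at k X \<longleftrightarrow>
     0 < X$k$k \<and> (\<forall>x. 0 \<le> X$x$x) \<and> (\<forall>x. x \<noteq> k \<longrightarrow> 2 * X$x$x < X$k$k)"

lemma dominant_diagonal_at_diagonal_part [simp]:
  "dominant_diagonal_at k (diagonal_part X) \<longleftrightarrow> dominant_diagonal_at k X"
  by (simp add: dominant_diagonal_at_def diagonal_part_def)

lemma separating_diagonal_if_dominant:
  assumes "diagonal_matrix H" "dominant_diagonal_at k H"
  shows "separating_diagonal k H"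
  unfolding separating_diagonal_def
proof (intro conjI allI impI)
  fix c d d'
  assume "d \<noteq> k" "d' \<noteq> k"
  then have "0 \<le> H$c$c" "2 * H$d$d < H$k$k" "2 * H$d'$d' < H$k$k"
    using assms(2) unfolding dominant_diagonal_at_def by auto
  then show "H$k$k - H$d$d \<noteq> H$d'$d' - H$c$c"
    by linarith
qed (rule assms(1))

lemma trace_pos_if_dominant:
  fixes H :: "real^'n::finite^'n"
  assumes "dominant_diagonal_at k H"
  shows "0 < trace H"
  using assms member_le_sum[of k UNIV "\<lambda>x. H$x$x"]
  by (simp add: trace_def dominant_diagonal_at_def)

lemma lie_subalgebra_eigen_split:
  assumes L: "lie_subalgebra L" and "diagonal_matrix H" "H \<in> L"
    and Z: "c *\<^sub>R mat_unit i j + d *\<^sub>R mat_unit i' j' \<in> L"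
    and "c \<noteq> 0" "H$i$i - H$j$j \<noteq> H$i'$i' - H$j'$j'"
  shows "mat_unit i j \<in> L"
proof -
  let ?Z = "c *\<^sub>R mat_unit i j + d *\<^sub>R mat_unit i' j'"
  have "lie_bracket H ?Z - (H$i'$i' - H$j'$j') *\<^sub>R ?Z \<in> L"
    using assms lie_subalgebra_bracket[OF L] lie_subalgebra_subspace[OF L]
    by (simp add: subspace_diff subspace_scale)
  also have "lie_bracket H ?Z - (H$i'$i' - H$j'$j') *\<^sub>R ?Z =
      (c * ((H$i$i - H$j$j) - (H$i'$i' - H$j'$j'))) *\<^sub>R mat_unit i j"
    using \<open>diagonal_matrix H\<close>
    by (simp add: lie_bracket_add_right lie_bracket_scaleR_right lie_bracket_diagonal_mat_unit
        algebra_simps)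
  finally show ?thesis
    using assms(5,6) lie_subalgebra_scaleR_iff[OF L] by simp
qed

text \<open>The second term of [E_pa, [X, E_bs]] = X_ab E_ps + X_sp E_ba is removed by bracketing with
  E_kp if k \<notin> {a, p}, and by the eigenvalues of ad H otherwise.\<close>
lemma lie_subalgebra_row_unit_across_arc:
  assumes L: "lie_subalgebra L" and "X \<in> L" "X$a$b \<noteq> 0"
    and "H \<in> L" and H: "separating_diagonal k H"
    and pa: "mat_unit p a \<in> L" and ap: "mat_unit a p \<in> L" and "mat_unit b s \<in> L"
    and "a \<noteq> b" "s \<noteq> p" "p \<noteq> b" "b \<noteq> k" "s \<noteq> k"
    and ka: "a = k \<or> mat_unit k a \<in> L"
  shows "mat_unit k s \<in> L"
proof -
  have Z: "X$a$b *\<^sub>R mat_unit p s + X$s$p *\<^sub>R mat_unit b a \<in> L"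
    using lie_subalgebra_bracket[OF L pa lie_subalgebra_bracket[OF L \<open>X \<in> L\<close> \<open>mat_unit b s \<in> L\<close>]]
    by (simp add: lie_bracket_mat_unit_sandwich[OF \<open>a \<noteq> b\<close> \<open>s \<noteq> p\<close>])
  show ?thesis
  proof (cases "k = a \<or> k = p")
    case True
    have "H$k$k - H$b$b \<noteq> H$s$s - H$p$p" "H$k$k - H$s$s \<noteq> H$b$b - H$a$a"
      using H \<open>b \<noteq> k\<close> \<open>s \<noteq> k\<close> unfolding separating_diagonal_def by blast+
    with True have "H$p$p - H$s$s \<noteq> H$b$b - H$a$a"
      by auto
    then have "mat_unit p s \<in> L"
      using lie_subalgebra_eigen_split[OF L _ \<open>H \<in> L\<close> Z \<open>X$a$b \<noteq> 0\<close>] H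
      by (simp add: separating_diagonal_def)
    then show ?thesis
      using True lie_subalgebra_mat_unit_trans[OF L ap] \<open>s \<noteq> k\<close> by auto
  next
    case False
    then have "mat_unit k p \<in> L"
      using ka lie_subalgebra_mat_unit_trans[OF L _ ap] by auto
    from lie_subalgebra_bracket[OF L this Z]
    have "X$a$b *\<^sub>R mat_unit k s \<in> L"
      using False \<open>s \<noteq> k\<close> \<open>p \<noteq> b\<close>
      by (auto simp add: lie_bracket_add_right lie_bracket_scaleR_right lie_bracket_mat_unit)
    then show ?thesis
      using lie_subalgebra_scaleR_iff[OF L \<open>X$a$b \<noteq> 0\<close>] by simp
  qed
qed

lemma lie_subalgebra_row_unit_along_arc:
  assumes L: "lie_subalgebra L" and GS: "components_strong_nontrivial GS"
    and arcs: "\<And>i j. (i, j) \<in> GS \<Longrightarrow> mat_unit i j \<in> L"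
    and "X \<in> L" and X: "\<And>i j. (i, j) \<in> GA \<Longrightarrow> X$i$j \<noteq> 0"
    and "H \<in> L" "separating_diagonal k H"
    and ab: "(a, b) \<in> GA \<union> GS" and ka: "a = k \<or> mat_unit k a \<in> L" and "b \<noteq> k"
  shows "mat_unit k b \<in> L"
proof (cases "(a, b) \<in> weakly_reach GS")
  case True
  then have "a = b \<or> mat_unit a b \<in> L"
    using lie_subalgebra_mat_unit_component[OF L GS arcs] by blast
  then show ?thesis
    using ka \<open>b \<noteq> k\<close> lie_subalgebra_mat_unit_trans[OF L] by metis
next
  case False
  then have "(a, b) \<in> GA" "a \<noteq> b"
    using ab by (auto simp: weakly_reach_def)
  obtain p where "p \<noteq> a" and ap: "(a, p) \<in> weakly_reach GS"
    using GS unfolding components_strong_nontrivial_def by blast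
  obtain s where "s \<noteq> b" and bs: "(b, s) \<in> weakly_reach GS"
    using GS unfolding components_strong_nontrivial_def by blast
  have "p \<noteq> b"
    using False ap by blast
  have "s \<noteq> p"
    using False ap weakly_reach_sym[OF bs] unfolding weakly_reach_def by (metis rtrancl_trans)
  have unit: "mat_unit x y \<in> L" if "(x, y) \<in> weakly_reach GS" "x \<noteq> y" for x y
    using lie_subalgebra_mat_unit_component[OF L GS arcs that] .
  have sb: "mat_unit s b \<in> L"
    using unit[OF weakly_reach_sym[OF bs]] \<open>s \<noteq> b\<close> by simp
  show ?thesis
  proof (cases "s = k")
    case True
    then show ?thesis using sb by simp
  next
    case False
    have "mat_unit k s \<in> L"
    proof (rule lie_subalgebra_row_unit_across_arc[OF L \<open>X \<in> L\<close> X[OF \<open>(a, b) \<in> GA\<close>] \<open>H \<in> L\<close>])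
      show "mat_unit p a \<in> L" "mat_unit a p \<in> L" "mat_unit b s \<in> L"
        using unit[OF weakly_reach_sym[OF ap]] unit[OF ap] unit[OF bs] \<open>p \<noteq> a\<close> \<open>s \<noteq> b\<close> by auto
    qed (use assms \<open>a \<noteq> b\<close> \<open>s \<noteq> p\<close> \<open>p \<noteq> b\<close> False in auto)
    then show ?thesis
      using lie_subalgebra_mat_unit_trans[OF L _ sb] \<open>b \<noteq> k\<close> by blast
  qed
qed

lemma lie_subalgebra_row_units:
  assumes L: "lie_subalgebra L" and GS: "components_strong_nontrivial GS"
    and "strongly_connected_digraph (GA \<union> GS)"
    and arcs: "\<And>i j. (i, j) \<in> GS \<Longrightarrow> mat_unit i j \<in> L"
    and "X \<in> L" "\<And>i j. (i, j) \<in> GA \<Longrightarrow> X$i$j \<noteq> 0"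
    and "H \<in> L" "separating_diagonal k H" and "y \<noteq> k"
  shows "mat_unit k y \<in> L"
proof -
  have "(k, y) \<in> (GA \<union> GS)\<^sup>*"
    using assms(3) by (simp add: strongly_connected_digraph_def)
  then have "y = k \<or> mat_unit k y \<in> L"
  proof (induction rule: rtrancl_induct)
    case (step a b)
    then show ?case
      using lie_subalgebra_row_unit_along_arc[OF L GS arcs assms(5-8)] by blast
  qed simp
  with \<open>y \<noteq> k\<close> show ?thesis by simp
qed

lemma transpose_uminus: "transpose (- A) = - transpose A"
  by (simp add: transpose_def vec_eq_iff)

lemma transpose_mat_unit: "transpose (mat_unit i j) = mat_unit j i"
  by (auto simp: transpose_def vec_eq_iff)

lemma lie_bracket_neg_transpose:
  "- transpose (lie_bracket X Y) = lie_bracket (- transpose X) (- transpose Y)"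
  by (simp add: vec_eq_iff lie_bracket_def transpose_def matrix_matrix_mult_def mult.commute)

lemma lie_subalgebra_neg_transpose_vimage:
  assumes "lie_subalgebra L"
  shows "lie_subalgebra ((\<lambda>M. - transpose M) -` L)"
proof -
  have "linear (\<lambda>M :: real^'n^'n. - transpose M)"
    by (rule linearI) (simp_all add: transpose_def vec_eq_iff)
  then have "subspace ((\<lambda>M. - transpose M) -` L)"
    using linear_subspace_vimage lie_subalgebra_subspace[OF assms] by blast
  then show ?thesis
    using assms by (simp add: lie_subalgebra_def lie_bracket_neg_transpose)
qed

lemma separating_diagonal_neg_transpose:
  assumes "separating_diagonal k H"
  shows "separating_diagonal k (- transpose H)"
  using assms unfolding separating_diagonal_def diagonal_matrix_def
  by (simp add: transpose_def) (metis minus_diff_eq)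

text \<open>The map M \<mapsto> - transpose M is an automorphism of gl(n) reversing all arcs, so rows
  become columns.\<close>
lemma lie_subalgebra_column_units:
  assumes L: "lie_subalgebra L" and GS: "components_strong_nontrivial GS"
    and sc: "strongly_connected_digraph (GA \<union> GS)"
    and arcs: "\<And>i j. (i, j) \<in> GS \<Longrightarrow> mat_unit i j \<in> L"
    and "X \<in> L" and X: "\<And>i j. (i, j) \<in> GA \<Longrightarrow> X$i$j \<noteq> 0"
    and "H \<in> L" "separating_diagonal k H" and "y \<noteq> k"
  shows "mat_unit y k \<in> L"
proof -
  let ?L = "(\<lambda>M. - transpose M) -` L"
  have "mat_unit k y \<in> ?L"
  proof (rule lie_subalgebra_row_units[of ?L "GS\<inverse>" "GA\<inverse>" "- transpose X" "- transpose H"])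
    show "lie_subalgebra ?L"
      by (rule lie_subalgebra_neg_transpose_vimage[OF L])
    show "strongly_connected_digraph (GA\<inverse> \<union> GS\<inverse>)"
      using strongly_connected_digraph_converse[OF sc] by (simp add: converse_Un)
    show "mat_unit i j \<in> ?L" if "(i, j) \<in> GS\<inverse>" for i j
      using arcs that L by (simp add: transpose_mat_unit lie_subalgebra_def subspace_neg)
    show "(- transpose X) $ i $ j \<noteq> 0" if "(i, j) \<in> GA\<inverse>" for i j
      using X that by (simp add: transpose_def)
  qed (use assms components_strong_nontrivial_converse separating_diagonal_neg_transpose in
      \<open>auto simp: transpose_uminus\<close>)
  then have "- mat_unit y k \<in> L"
    by (simp add: transpose_mat_unit)
  then show ?thesis
    using subspace_neg[OF lie_subalgebra_subspace[OF L]] by fastforce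
qed

lemma subspace_eq_UNIV_if_mat_units:
  assumes "subspace L" "\<And>i j. mat_unit i j \<in> L"
  shows "L = UNIV"
proof -
  have "(\<Sum>(i, j)\<in>UNIV. M$i$j *\<^sub>R mat_unit i j) \<in> L" for M
    using assms by (intro subspace_sum) (auto intro: subspace_scale)
  then show ?thesis
    by (auto simp: mat_unit_expansion)
qed

lemma lie_subalgebra_eq_UNIV_if_star:
  assumes L: "lie_subalgebra L" and star: "\<And>y. y \<noteq> k \<Longrightarrow> mat_unit k y \<in> L \<and> mat_unit y k \<in> L"
    and "H \<in> L" "diagonal_matrix H" "trace H \<noteq> 0"
  shows "L = UNIV"
proof -
  have sub: "subspace L"
    using L by (rule lie_subalgebra_subspace)
  have off_diagonal: "mat_unit x y \<in> L" if "x \<noteq> y" for x y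
    using star that lie_subalgebra_mat_unit_trans[OF L] by metis
  have diagonal_diff: "mat_unit x x - mat_unit k k \<in> L" for x
  proof (cases "x = k")
    case False
    then have "lie_bracket (mat_unit x k) (mat_unit k x) \<in> L"
      by (intro lie_subalgebra_bracket[OF L] off_diagonal) auto
    with False show ?thesis
      by (simp add: lie_bracket_mat_unit)
  qed (simp add: subspace_0[OF sub])
  have "H - (\<Sum>x\<in>UNIV. H$x$x *\<^sub>R (mat_unit x x - mat_unit k k)) = trace H *\<^sub>R mat_unit k k"
    using diagonal_expansion[OF \<open>diagonal_matrix H\<close>]
    by (simp add: scaleR_diff_right sum_subtractf scaleR_sum_left trace_def)
  moreover have "H - (\<Sum>x\<in>UNIV. H$x$x *\<^sub>R (mat_unit x x - mat_unit k k)) \<in> L"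
    by (intro subspace_diff[OF sub \<open>H \<in> L\<close>] subspace_sum[OF sub] subspace_scale[OF sub]
        diagonal_diff)
  ultimately have kk: "mat_unit k k \<in> L"
    using lie_subalgebra_scaleR_iff[OF L \<open>trace H \<noteq> 0\<close>] by simp
  have "mat_unit x x \<in> L" for x
    using subspace_add[OF sub diagonal_diff kk] by simp
  with off_diagonal show ?thesis
    by (metis subspace_eq_UNIV_if_mat_units[OF sub])
qed

lemma lie_subalgebra_eq_UNIV:
  assumes "lie_subalgebra L" "components_strong_nontrivial GS"
    "strongly_connected_digraph (GA \<union> GS)"
    "\<And>i j. (i, j) \<in> GS \<Longrightarrow> mat_unit i j \<in> L"
    "X \<in> L" "\<And>i j. (i, j) \<in> GA \<Longrightarrow> X$i$j \<noteq> 0"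
    "H \<in> L" "separating_diagonal k H" "trace H \<noteq> 0"
  shows "L = UNIV"
  using lie_subalgebra_eq_UNIV_if_star[of L k H] assms
    lie_subalgebra_row_units[OF assms(1-8)] lie_subalgebra_column_units[OF assms(1-8)]
  by (simp add: separating_diagonal_def)

lemma lie_subalgebra_separating_diagonal_exists:
  assumes L: "lie_subalgebra L" and GS: "components_strong_nontrivial GS"
    and arcs: "\<And>i j. (i, j) \<in> GS \<Longrightarrow> mat_unit i j \<in> L" and "X \<in> L"
    and "(k, k) \<in> GS \<or> dominant_diagonal_at k X"
  shows "\<exists>H\<in>L. separating_diagonal k H \<and> trace H \<noteq> 0"
proof -
  obtain H where "H \<in> L" "diagonal_matrix H" "dominant_diagonal_at k H"
  proof (cases "(k, k) \<in> GS")
    case True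
    then show ?thesis
      using that arcs diagonal_matrix_mat_unit by (force simp: dominant_diagonal_at_def)
  next
    case False
    have "diagonal_part X \<in> L"
      using lie_subalgebra_diagonal_part[OF L \<open>X \<in> L\<close>]
        lie_subalgebra_separating_diagonals[OF L GS arcs] by blast
    with False assms(5) show ?thesis
      by (intro that[of "diagonal_part X"]) (simp_all add: diagonal_matrix_diagonal_part)
  qed
  then show ?thesis
    using separating_diagonal_if_dominant trace_pos_if_dominant by (metis less_irrefl)
qed

theorem lemma9:
  fixes GA GS :: "('n::finite \<times> 'n) set"
  assumes "components_strong_nontrivial GS"
    and "strongly_connected_digraph (GA \<union> GS)"
    and "\<exists>i. (i, i) \<in> GA \<union> GS"
  shows "\<exists>A \<in> sigma_r GA. lie_generated (insert A (units_of_arcs GS)) = UNIV"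
proof -
  obtain k where k: "(k, k) \<in> GA \<union> GS"
    using assms(3) by blast
  define l where "l q = (if q = (k, k) then 3 else 1 :: real)" for q
  define A where "A = (\<Sum>(i, j)\<in>GA. l (i, j) *\<^sub>R mat_unit i j)"
  have A_nth: "A$u$v = (if (u, v) \<in> GA then l (u, v) else 0)" for u v
    unfolding A_def by (rule sum_mat_units_nth)
  have "L = UNIV" if generators: "insert A (units_of_arcs GS) \<subseteq> L" and L: "lie_subalgebra L" for L
  proof -
    have arcs: "\<And>i j. (i, j) \<in> GS \<Longrightarrow> mat_unit i j \<in> L" and "A \<in> L"
      using generators by (auto simp: units_of_arcs_def)
    have "\<exists>H\<in>L. separating_diagonal k H \<and> trace H \<noteq> 0"
      by (rule lie_subalgebra_separating_diagonal_exists[OF L assms(1) arcs \<open>A \<in> L\<close>])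
        (use k in \<open>auto simp: dominant_diagonal_at_def A_nth l_def\<close>)
    then obtain H where "H \<in> L" "separating_diagonal k H" "trace H \<noteq> 0"
      by blast
    then show ?thesis
      using lie_subalgebra_eq_UNIV[OF L assms(1,2) arcs \<open>A \<in> L\<close>] by (simp add: A_nth l_def)
  qed
  moreover have "A \<in> sigma_r GA"
    unfolding sigma_r_def A_def by (intro CollectI exI[of _ l]) (simp add: l_def)
  ultimately show ?thesis
    unfolding lie_generated_def by blast
qed

end
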